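(* Let $\mathrm{k}$ be an infinite field, $\mathcal{A}$ a unital associative $\mathrm{k}$-algebra satisfying $\mathbf{H}_{\mathrm{s}}$, $V$ a fixed finite-dimensional $\mathrm{k}$-subspace of $\mathcal{A}$ with $V\cap U(\mathcal{A})\neq\emptyset$, and $0<\lambda\leq1$ real. Then: (1) There exists a unique atom $\mathcal{H}_\lambda$ of $V$ containing $1$. (2) $\mathcal{H}_\lambda$ is a subalgebra of $\mathcal{A}$ containing $\mathcal{H}_l(V):=\{h\in\mathcal{A}\mid hV\subseteq V\}$. (3) The atoms of $V$ which intersect $U(\mathcal{A})$ are exactly the subspaces $x\mathcal{H}_\lambda$ with $x\in U(\mathcal{A})$. (4) For every finite-dimensional $\mathrm{k}$-subspace $W$ of $\mathcal{A}$ with $W\cap U(\mathcal{A})\neq\emptyset$, $\dim_{\mathrm{k}}(\mathrm{k}\langle WV\rangle)\geq\lambda\dim_{\mathrm{k}}(W)+\dim_{\mathrm{k}}(V)-\lambda\dim_{\mathrm{k}}(\mathcal{H}_\lambda)$.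
   Context: Algebras are unital associative, subalgebras contain $1$; $U(\mathcal{A})$ is the group of invertible elements; $\mathrm{k}\langle S\rangle$ is linear span, $\dim_{\mathrm{k}}(S)=\dim_{\mathrm{k}}\mathrm{k}\langle S\rangle$, $ST=\{st\mid s\in S,t\in T\}$. Hypothesis $\mathbf{H}_{\mathrm{s}}$: $\mathcal{A}$ is finite-dimensional over $\mathrm{k}$, or $\mathrm{k}\in\{\mathbb{R},\mathbb{C}\}$ and $\mathcal{A}$ is a Banach algebra over $\mathrm{k}$, or $\mathcal{A}$ is a finite product of field extensions of $\mathrm{k}$. Connectivity: for a finite-dimensional subspace $W$ set $c(W):=\dim_{\mathrm{k}}(\mathrm{k}\langle WV\rangle)-\lambda\dim_{\mathrm{k}}(W)$. Let $\kappa$ be the infimum of $c(W)$ over all finite-dimensional subspaces $W$ with $W\cap U(\mathcal{A})\neq\emptyset$. A fragment of $V$ is such a subspace $W$ (finite-dimensional, meeting $U(\mathcal{A})$) with $c(W)=\kappa$; an atom of $V$ is a fragment of minimal dimension. *)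

theory Defs
  imports Complex_Main
begin

definition is_algebra :: "('k::field \<Rightarrow> 'a::ring_1 \<Rightarrow> 'a) \<Rightarrow> bool" where
  "is_algebra sc \<longleftrightarrow> vector_space sc \<and>
     (\<forall>c x y. sc c (x * y) = sc c x * y \<and> sc c (x * y) = x * sc c y)"

definition units :: "'a::ring_1 set" where
  "units = {x. \<exists>y. x * y = 1 \<and> y * x = 1}"

abbreviation lspan :: "('k::field \<Rightarrow> 'a::ring_1 \<Rightarrow> 'a) \<Rightarrow> 'a set \<Rightarrow> 'a set" where
  "lspan sc S \<equiv> module.span sc S"

abbreviation ldim :: "('k::field \<Rightarrow> 'a::ring_1 \<Rightarrow> 'a) \<Rightarrow> 'a set \<Rightarrow> nat" where
  "ldim sc S \<equiv> vector_space.dim sc S"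

definition fin_dim_subspace :: "('k::field \<Rightarrow> 'a::ring_1 \<Rightarrow> 'a) \<Rightarrow> 'a set \<Rightarrow> bool" where
  "fin_dim_subspace sc W \<longleftrightarrow> (\<exists>B. finite B \<and> W = lspan sc B)"

definition setprod :: "'a::ring_1 set \<Rightarrow> 'a set \<Rightarrow> 'a set" where
  "setprod S T = {s * t | s t. s \<in> S \<and> t \<in> T}"

definition subalgebra :: "('k::field \<Rightarrow> 'a::ring_1 \<Rightarrow> 'a) \<Rightarrow> 'a set \<Rightarrow> bool" where
  "subalgebra sc H \<longleftrightarrow> module.subspace sc H \<and> 1 \<in> H \<and> (\<forall>x\<in>H. \<forall>y\<in>H. x * y \<in> H)"

definition field_iso :: "('k::field \<Rightarrow> 'f::field) \<Rightarrow> bool" where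
  "field_iso \<phi> \<longleftrightarrow> bij \<phi> \<and> \<phi> 1 = 1 \<and> (\<forall>a b. \<phi> (a + b) = \<phi> a + \<phi> b \<and> \<phi> (a * b) = \<phi> a * \<phi> b)"

definition banach_norm :: "('k::field \<Rightarrow> 'a::ring_1 \<Rightarrow> 'a) \<Rightarrow> ('k \<Rightarrow> real) \<Rightarrow> ('a \<Rightarrow> real) \<Rightarrow> bool" where
  "banach_norm sc av N \<longleftrightarrow>
     (\<forall>x. N x = 0 \<longleftrightarrow> x = 0) \<and>
     (\<forall>x y. N (x + y) \<le> N x + N y) \<and>
     (\<forall>c x. N (sc c x) = av c * N x) \<and>
     (\<forall>x y. N (x * y) \<le> N x * N y) \<and>
     (\<forall>f :: nat \<Rightarrow> 'a.
        (\<forall>e>0. \<exists>M. \<forall>m\<ge>M. \<forall>n\<ge>M. N (f m - f n) < e) \<longrightarrow>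
        (\<exists>L. \<forall>e>0. \<exists>M. \<forall>n\<ge>M. N (f n - L) < e))"

definition Hs :: "('k::field \<Rightarrow> 'a::ring_1 \<Rightarrow> 'a) \<Rightarrow> bool" where
  "Hs sc \<longleftrightarrow>
     fin_dim_subspace sc (UNIV :: 'a set)
   \<or> (\<exists>(\<phi> :: 'k \<Rightarrow> real) N. field_iso \<phi> \<and> banach_norm sc (\<lambda>c. \<bar>\<phi> c\<bar>) N)
   \<or> (\<exists>(\<phi> :: 'k \<Rightarrow> complex) N. field_iso \<phi> \<and> banach_norm sc (\<lambda>c. cmod (\<phi> c)) N)
   \<or> ((\<forall>x y :: 'a. x * y = y * x) \<and>
      (\<exists>n::nat. \<exists>e :: nat \<Rightarrow> 'a.
         (\<Sum>i<n. e i) = 1 \<and>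
         (\<forall>i<n. \<forall>j<n. e i * e j = (if i = j then e i else 0)) \<and>
         (\<forall>i<n. e i \<noteq> 0 \<and> (\<forall>x. e i * x \<noteq> 0 \<longrightarrow> (\<exists>y. (e i * x) * (e i * y) = e i)))))"

definition admissible :: "('k::field \<Rightarrow> 'a::ring_1 \<Rightarrow> 'a) \<Rightarrow> 'a set \<Rightarrow> bool" where
  "admissible sc W \<longleftrightarrow> fin_dim_subspace sc W \<and> W \<inter> units \<noteq> {}"

definition conn :: "('k::field \<Rightarrow> 'a::ring_1 \<Rightarrow> 'a) \<Rightarrow> real \<Rightarrow> 'a set \<Rightarrow> 'a set \<Rightarrow> real" where
  "conn sc lam V W = real (ldim sc (lspan sc (setprod W V))) - lam * real (ldim sc W)"

definition kappa :: "('k::field \<Rightarrow> 'a::ring_1 \<Rightarrow> 'a) \<Rightarrow> real \<Rightarrow> 'a set \<Rightarrow> real" where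
  "kappa sc lam V = Inf (conn sc lam V ` {W. admissible sc W})"

definition fragment :: "('k::field \<Rightarrow> 'a::ring_1 \<Rightarrow> 'a) \<Rightarrow> real \<Rightarrow> 'a set \<Rightarrow> 'a set \<Rightarrow> bool" where
  "fragment sc lam V W \<longleftrightarrow> admissible sc W \<and> conn sc lam V W = kappa sc lam V"

definition atom :: "('k::field \<Rightarrow> 'a::ring_1 \<Rightarrow> 'a) \<Rightarrow> real \<Rightarrow> 'a set \<Rightarrow> 'a set \<Rightarrow> bool" where
  "atom sc lam V W \<longleftrightarrow> fragment sc lam V W \<and>
     (\<forall>W'. fragment sc lam V W' \<longrightarrow> ldim sc W \<le> ldim sc W')"

definition left_stabilizer :: "'a::ring_1 set \<Rightarrow> 'a set" where
  "left_stabilizer V = {h. \<forall>v\<in>V. h * v \<in> V}"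

end

theory Submission
  imports Defs
begin

text \<open>Everything rests on the fact that, under \<open>H\<^sub>s\<close> over an infinite field, every line
  \<open>1 + k h\<close> contains a unit (Neumann series in the Banach case, finitely many
  eigenvalues of left multiplication in the finite-dimensional case, finitely many bad
  scalars per factor in a product of fields).

  Connectivity values below any bound form a finite set, so fragments exist. Grassmann's
  formula makes \<open>conn\<close> submodular, so two fragments sharing a unit intersect in a
  fragment; hence two atoms sharing a unit coincide. Left multiplication by a unit
  permutes atoms, which gives uniqueness of the atom \<open>H\<close> through \<open>1\<close> and describes all
  atoms meeting the units as translates \<open>xH\<close>. If \<open>x \<in> H\<close> and \<open>g = 1 + c x\<close> is a unit,
  then \<open>g \<in> H\<close> forces \<open>gH = H\<close>, so \<open>H\<close> is closed under multiplication. Adding the left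
  stabilizer of \<open>V\<close> to \<open>H\<close> does not enlarge \<open>span (HV)\<close>, so it cannot enlarge \<open>H\<close>. The
  dimension bound is \<open>conn W \<ge> conn H\<close> together with \<open>dim V \<le> dim (span (HV))\<close>.\<close>

section \<open>Finite-dimensional subsets of a vector space\<close>

text \<open>The algebra itself need not be finite-dimensional, so the library's
  \<open>finite_dimensional_vector_space\<close> does not apply; \<open>dim\<close> is only meaningful on
  sets spanned by finitely many vectors.\<close>

definition fin_dim :: "('k::field \<Rightarrow> 'b::ab_group_add \<Rightarrow> 'b) \<Rightarrow> 'b set \<Rightarrow> bool" where
  "fin_dim scale S \<longleftrightarrow> (\<exists>B. finite B \<and> S \<subseteq> module.span scale B)"

context vector_space
begin

lemma fin_dim_iff: "fin_dim scale S \<longleftrightarrow> (\<exists>B. finite B \<and> S \<subseteq> span B)"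
  by (simp add: fin_dim_def)

lemma fin_dim_subset_span: "fin_dim scale T \<Longrightarrow> S \<subseteq> span T \<Longrightarrow> fin_dim scale S"
  unfolding fin_dim_iff by (metis span_mono span_span subset_trans)

lemma fin_dim_subset: "S \<subseteq> T \<Longrightarrow> fin_dim scale T \<Longrightarrow> fin_dim scale S"
  using fin_dim_subset_span span_superset by blast

lemma fin_dim_span [simp]: "fin_dim scale (span S) \<longleftrightarrow> fin_dim scale S"
  unfolding fin_dim_iff by (metis span_minimal span_superset subspace_span subset_trans)

lemma fin_dim_finite: "finite B \<Longrightarrow> fin_dim scale B"
  unfolding fin_dim_iff using span_superset by blast

lemma fin_dim_Un [simp]: "fin_dim scale (S \<union> T) \<longleftrightarrow> fin_dim scale S \<and> fin_dim scale T"
proof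
  assume "fin_dim scale S \<and> fin_dim scale T"
  then obtain B C where "finite B" "S \<subseteq> span B" "finite C" "T \<subseteq> span C"
    unfolding fin_dim_iff by blast
  then have "finite (B \<union> C)" "S \<union> T \<subseteq> span (B \<union> C)"
    using span_mono[of B "B \<union> C"] span_mono[of C "B \<union> C"] by auto
  then show "fin_dim scale (S \<union> T)"
    unfolding fin_dim_iff by blast
qed (auto intro: fin_dim_subset)

lemma fin_dim_obtain_basis:
  assumes "fin_dim scale S"
  obtains B where "finite B" "independent B" "B \<subseteq> S" "S \<subseteq> span B" "card B = dim S"
proof -
  obtain C where C: "finite C" "S \<subseteq> span C"
    using assms fin_dim_iff by auto
  obtain B where B: "B \<subseteq> S" "independent B" "S \<subseteq> span B" "card B = dim S"
    by (rule basis_exists)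
  have "finite B"
    using independent_span_bound[OF C(1) B(2)] B(1) C(2) by auto
  with B that show ?thesis
    by auto
qed

lemma independent_card_le_dim:
  assumes "fin_dim scale S" "independent B" "B \<subseteq> span S"
  shows "finite B \<and> card B \<le> dim S"
proof -
  obtain C where C: "finite C" "independent C" "C \<subseteq> S" "S \<subseteq> span C" "card C = dim S"
    using fin_dim_obtain_basis[OF assms(1)] .
  have "B \<subseteq> span C"
    using assms(3) C(4) by (metis span_minimal subspace_span subset_trans)
  with independent_span_bound[OF C(1) assms(2)] C(5) show ?thesis
    by auto
qed

lemma dim_le_if_subset_span:
  assumes "fin_dim scale T" "S \<subseteq> span T"
  shows "dim S \<le> dim T"
proof -
  obtain B where B: "B \<subseteq> S" "independent B" "S \<subseteq> span B" "card B = dim S"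
    by (rule basis_exists)
  with independent_card_le_dim[OF assms(1) B(2)] assms(2) show ?thesis
    by auto
qed

lemma subspace_eq_if_dim_le:
  assumes "fin_dim scale T" "subspace S" "subspace T" "S \<subseteq> T" "dim T \<le> dim S"
  shows "S = T"
proof (rule ccontr)
  assume "S \<noteq> T"
  then obtain x where x: "x \<in> T" "x \<notin> S"
    using assms(4) by auto
  obtain B where B: "finite B" "independent B" "B \<subseteq> S" "S \<subseteq> span B" "card B = dim S"
    using fin_dim_obtain_basis fin_dim_subset[OF assms(4,1)] by metis
  have xB: "x \<notin> span B"
    using x span_subspace[OF B(3,4) assms(2)] by auto
  have "independent (insert x B)" "insert x B \<subseteq> span T"
    using independent_insertI[OF xB B(2)] x B(3) assms(4) span_superset by auto
  then have "card (insert x B) \<le> dim T"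
    using independent_card_le_dim[OF assms(1)] by blast
  moreover have "card (insert x B) = Suc (dim S)"
    using B(1,5) xB span_superset by (metis card_insert_disjoint subsetD)
  ultimately show False
    using assms(5) by simp
qed

lemma independent_Un_Diff:
  assumes T: "subspace T" and B1: "independent B1"
    and B2: "independent B2" "B2 \<subseteq> T" "finite B2"
    and C: "C \<subseteq> B2" "span B1 \<inter> T \<subseteq> span C"
  shows "independent (B1 \<union> (B2 - C))" "B1 \<inter> (B2 - C) = {}"
proof -
  have not_in_span: "d \<notin> span (B1 \<union> F)" if d: "d \<in> B2 - C" and F: "F \<subseteq> B2 - C" "d \<notin> F" for d F
  proof
    assume "d \<in> span (B1 \<union> F)"
    then obtain s t where st: "d = s + t" "s \<in> span B1" "t \<in> span F"
      by (auto simp: span_Un)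
    have "span F \<subseteq> T"
      using F B2(2) T by (intro span_minimal) auto
    then have "s \<in> span B1 \<inter> T"
      using st d B2(2) T subspace_diff[of T d t] by (auto simp: eq_diff_eq)
    then have "s \<in> span (B2 - {d})"
      using C d span_mono[of C "B2 - {d}"] by auto
    moreover have "t \<in> span (B2 - {d})"
      using st(3) F d span_mono[of F "B2 - {d}"] by auto
    ultimately have "d \<in> span (B2 - {d})"
      using st(1) span_add by simp
    then show False
      using d B2(1) dependent_def by blast
  qed
  have "independent (B1 \<union> F)" if "F \<subseteq> B2 - C" for F
  proof -
    have "finite F"
      using that B2(3) finite_subset by blast
    then show ?thesis
      using that
    proof (induct F rule: finite_induct)
      case empty
      then show ?case using B1 by simp
    next
      case (insert a F)
      then show ?case
        using not_in_span[of a F] independent_insertI[of a "B1 \<union> F"] by auto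
    qed
  qed
  then show "independent (B1 \<union> (B2 - C))"
    by blast
  show "B1 \<inter> (B2 - C) = {}"
  proof (rule equals0I)
    fix d
    assume "d \<in> B1 \<inter> (B2 - C)"
    then show False
      using not_in_span[of d "{}"] span_base[of d B1] by simp
  qed
qed

text \<open>Grassmann's formula: extend a basis \<open>C\<close> of \<open>S \<inter> T\<close> to bases \<open>B1\<close> of \<open>S\<close> and
  \<open>B2\<close> of \<open>T\<close>; then \<open>B1 \<union> (B2 - C)\<close> is a basis of the sum.\<close>

lemma dim_span_Un_add_dim_Int:
  assumes sS: "subspace S" and sT: "subspace T" and fS: "fin_dim scale S" and fT: "fin_dim scale T"
  shows "dim (span (S \<union> T)) + dim (S \<inter> T) = dim S + dim T"
proof -
  obtain C where C: "finite C" "independent C" "C \<subseteq> S \<inter> T" "S \<inter> T \<subseteq> span C"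
    "card C = dim (S \<inter> T)"
    by (rule fin_dim_obtain_basis[OF fin_dim_subset[OF Int_lower1 fS]])
  obtain B1 where B1: "C \<subseteq> B1" "B1 \<subseteq> S" "independent B1" "S \<subseteq> span B1"
    using maximal_independent_subset_extend[of C S] C(2,3) by blast
  obtain B2 where B2: "C \<subseteq> B2" "B2 \<subseteq> T" "independent B2" "T \<subseteq> span B2"
    using maximal_independent_subset_extend[of C T] C(2,3) by blast
  have fB1: "finite B1" and fB2: "finite B2"
    using independent_card_le_dim[OF fS B1(3)] independent_card_le_dim[OF fT B2(3)]
      B1(2) B2(2) span_superset by blast+
  have dimS: "card B1 = dim S" and dimT: "card B2 = dim T"
    using basis_card_eq_dim[OF B1(2,4,3)] basis_card_eq_dim[OF B2(2,4,3)] .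
  have "span B1 = S"
    using span_subspace[OF B1(2) B1(4) sS] .
  then have indep: "independent (B1 \<union> (B2 - C))" "B1 \<inter> (B2 - C) = {}"
    using independent_Un_Diff[OF sT B1(3) B2(3,2) fB2 B2(1)] C(4) by auto
  have "span (B1 \<union> (B2 - C)) = span (S \<union> T)"
  proof (rule span_eq[THEN iffD2, OF conjI])
    show "B1 \<union> (B2 - C) \<subseteq> span (S \<union> T)"
      using B1(2) B2(2) span_superset by blast
    have "S \<subseteq> span (B1 \<union> (B2 - C))" "T \<subseteq> span (B1 \<union> (B2 - C))"
      using B1(1,4) B2(4) span_mono[of B1 "B1 \<union> (B2 - C)"] span_mono[of B2 "B1 \<union> (B2 - C)"]
      by auto
    then show "S \<union> T \<subseteq> span (B1 \<union> (B2 - C))"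
      by blast
  qed
  then have "dim (span (S \<union> T)) = card (B1 \<union> (B2 - C))"
    using dim_eq_card_independent[OF indep(1)] dim_span[of "B1 \<union> (B2 - C)"] by simp
  also have "\<dots> = dim S + (dim T - dim (S \<inter> T))"
    using card_Un_disjoint[OF fB1 _ indep(2)] fB2 dimS dimT C(5) card_Diff_subset[OF C(1) B2(1)]
    by simp
  finally show ?thesis
    using C(5) dimT card_mono[OF fB2 B2(1)] by simp
qed

lemma fin_dim_linear_image:
  assumes "Vector_Spaces.linear scale scale f" "fin_dim scale S"
  shows "fin_dim scale (f ` S)"
proof -
  interpret vector_space_pair scale scale ..
  obtain B where B: "finite B" "S \<subseteq> span B"
    using assms(2) fin_dim_iff by auto
  have "f ` S \<subseteq> span (f ` B)"
    using linear_spans_image[OF assms(1) B(2)] .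
  with B(1) show ?thesis
    unfolding fin_dim_iff by (intro exI[of _ "f ` B"]) simp
qed

lemma dim_linear_image_inj:
  assumes "Vector_Spaces.linear scale scale f" "inj f" "fin_dim scale S"
  shows "dim (f ` S) = dim S"
proof -
  interpret vector_space_pair scale scale ..
  obtain B where B: "finite B" "independent B" "B \<subseteq> S" "S \<subseteq> span B" "card B = dim S"
    using fin_dim_obtain_basis[OF assms(3)] .
  have "independent (f ` B)"
    using linear_independent_injective_image[OF assms(1) B(2) inj_on_subset[OF assms(2)]] by simp
  moreover have "f ` S \<subseteq> span (f ` B)"
    using linear_spans_image[OF assms(1) B(4)] .
  moreover have "card (f ` B) = card B"
    using card_image[OF inj_on_subset[OF assms(2)]] by simp
  ultimately show ?thesis
    using basis_card_eq_dim[of "f ` B" "f ` S"] B(3,5) by (simp add: image_mono)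
qed

lemma independent_eigenvectors:
  assumes lin: "Vector_Spaces.linear scale scale f" and "finite T"
    and eig: "\<And>t. t \<in> T \<Longrightarrow> x t \<noteq> 0 \<and> f (x t) = t *s x t"
  shows "independent (x ` T) \<and> inj_on x T"
  using \<open>finite T\<close> eig
proof (induction T rule: finite_induct)
  case empty
  then show ?case using independent_empty by simp
next
  case (insert r T)
  interpret vector_space_pair scale scale ..
  have IH: "independent (x ` T)" "inj_on x T"
    using insert by auto
  have "x r \<notin> span (x ` T)"
  proof
    assume "x r \<in> span (x ` T)"
    then obtain u where u: "x r = (\<Sum>v\<in>x ` T. u v *s v)"
      using span_finite[of "x ` T"] insert.hyps(1) by auto
    then have xr: "x r = (\<Sum>t\<in>T. u (x t) *s x t)"
      using sum.reindex[OF IH(2)] by simp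
    define w where "w v = u v * (the_inv_into T x v - r)" for v
    have "(\<Sum>v\<in>x ` T. w v *s v) = (\<Sum>t\<in>T. (u (x t) * (t - r)) *s x t)"
      using the_inv_into_f_f[OF IH(2)] by (simp add: sum.reindex[OF IH(2)] w_def)
    also have "\<dots> = f (x r) - r *s x r"
      unfolding xr linear_sum[OF lin] linear_scale[OF lin] scale_sum_right sum_subtractf[symmetric]
      using insert.prems by (intro sum.cong) (auto simp: algebra_simps)
    also have "\<dots> = 0"
      using insert.prems[of r] by simp
    finally have "(\<Sum>v\<in>x ` T. w v *s v) = 0" .
    then have "w v = 0" if "v \<in> x ` T" for v
      using IH(1)[unfolded independent_explicit_finite_subsets, rule_format,
          OF order_refl finite_imageI[OF insert.hyps(1)]] that by blast
    then have "u (x t) = 0" if "t \<in> T" for t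
      using that insert.hyps(2) the_inv_into_f_f[OF IH(2)] by (force simp: w_def)
    then have "x r = 0"
      using xr by simp
    then show False
      using insert.prems by blast
  qed
  then have "x r \<notin> x ` T"
    using span_base by blast
  with IH \<open>x r \<notin> span (x ` T)\<close> insert.hyps(2) show ?case
    using independent_insertI by simp
qed

end

lemma one_in_units [simp]: "1 \<in> units"
  unfolding units_def by auto

lemma units_mult:
  assumes "x \<in> units" "y \<in> units"
  shows "x * y \<in> units"
proof -
  obtain x' y' where "x * x' = 1" "x' * x = 1" "y * y' = 1" "y' * y = 1"
    using assms unfolding units_def by blast
  moreover have "(x * y) * (y' * x') = x * (y * y') * x'" "(y' * x') * (x * y) = y' * (x' * x) * y"
    by (simp_all only: mult.assoc)
  ultimately have "(x * y) * (y' * x') = 1" "(y' * x') * (x * y) = 1"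
    by simp_all
  then show ?thesis
    unfolding units_def by blast
qed

lemma units_obtain_inverse:
  assumes "x \<in> units"
  obtains y where "y \<in> units" "x * y = 1" "y * x = 1"
  using assms unfolding units_def by blast

lemma inj_mult_left_unit:
  assumes "x \<in> units"
  shows "inj (\<lambda>y. x * y)"
proof (rule injI)
  fix a b
  assume "x * a = x * b"
  moreover obtain x' where "x' * x = 1"
    using assms units_obtain_inverse by blast
  ultimately show "a = b"
    by (metis mult.assoc mult_1)
qed

lemma inj_mult_right_unit:
  assumes "x \<in> units"
  shows "inj (\<lambda>y. y * x)"
proof (rule injI)
  fix a b
  assume "a * x = b * x"
  moreover obtain x' where "x * x' = 1"
    using assms units_obtain_inverse by blast
  ultimately show "a = b"
    by (metis mult.assoc mult.right_neutral)
qed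

lemma inj_mult_left_iff:
  fixes a :: "'a::ring"
  shows "inj (\<lambda>x. a * x) \<longleftrightarrow> (\<forall>x. a * x = 0 \<longrightarrow> x = 0)"
proof
  assume zero: "\<forall>x. a * x = 0 \<longrightarrow> x = 0"
  show "inj (\<lambda>x. a * x)"
  proof (rule injI)
    fix x y
    assume "a * x = a * y"
    then have "a * (x - y) = 0"
      by (simp add: right_diff_distrib)
    then have "x - y = 0"
      using zero by blast
    then show "x = y"
      by simp
  qed
qed (metis injD mult_zero_right)

lemma image_mult_left_cancel:
  fixes x y :: "'a::monoid_mult"
  assumes "y * x = 1"
  shows "(\<lambda>h. y * h) ` (\<lambda>h. x * h) ` W = W"
proof -
  have "y * (x * h) = h" for h
    using assms mult.assoc[of y x h] by simp
  then show ?thesis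
    by (simp add: image_image)
qed

lemma finite_setprod:
  assumes "finite A" "finite B"
  shows "finite (setprod A B)"
proof -
  have "setprod A B = (\<lambda>(a, b). a * b) ` (A \<times> B)"
    unfolding setprod_def by auto
  with assms show ?thesis
    by simp
qed

lemma setprod_mono: "W \<subseteq> W' \<Longrightarrow> X \<subseteq> X' \<Longrightarrow> setprod W X \<subseteq> setprod W' X'"
  unfolding setprod_def by blast

lemma setprod_Un_left: "setprod (A \<union> B) X = setprod A X \<union> setprod B X"
  unfolding setprod_def by blast

lemma setprod_image_mult_left: "setprod ((\<lambda>h. x * h) ` W) X = (\<lambda>h. x * h) ` setprod W X"
proof
  show "setprod ((\<lambda>h. x * h) ` W) X \<subseteq> (\<lambda>h. x * h) ` setprod W X"
    unfolding setprod_def by (force simp: mult.assoc)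
  show "(\<lambda>h. x * h) ` setprod W X \<subseteq> setprod ((\<lambda>h. x * h) ` W) X"
  proof
    fix z
    assume "z \<in> (\<lambda>h. x * h) ` setprod W X"
    then obtain s t where "s \<in> W" "t \<in> X" "z = (x * s) * t"
      unfolding setprod_def by (auto simp: mult.assoc)
    then show "z \<in> setprod ((\<lambda>h. x * h) ` W) X"
      unfolding setprod_def by blast
  qed
qed

locale unital_algebra = vector_space sc for sc :: "'k::field \<Rightarrow> 'a::ring_1 \<Rightarrow> 'a" +
  assumes scale_mult_left: "sc c (x * y) = sc c x * y"
    and scale_mult_right: "sc c (x * y) = x * sc c y"

lemma unital_algebra_if_is_algebra:
  assumes "is_algebra sc"
  shows "unital_algebra sc"
proof -
  have "vector_space sc" "\<And>c x y. sc c (x * y) = sc c x * y" "\<And>c x y. sc c (x * y) = x * sc c y"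
    using assms unfolding is_algebra_def by blast+
  then show ?thesis
    by (intro unital_algebra.intro unital_algebra_axioms.intro)
qed

definition lines_meet_units :: "('k::field \<Rightarrow> 'a::ring_1 \<Rightarrow> 'a) \<Rightarrow> bool" where
  "lines_meet_units sc \<longleftrightarrow> (\<forall>h. \<exists>c. c \<noteq> 0 \<and> 1 + sc c h \<in> units)"

context unital_algebra
begin

lemma fin_dim_subspace_iff: "fin_dim_subspace sc W \<longleftrightarrow> subspace W \<and> fin_dim sc W"
proof
  assume W: "subspace W \<and> fin_dim sc W"
  then obtain B where B: "finite B" "independent B" "B \<subseteq> W" "W \<subseteq> span B" "card B = dim W"
    using fin_dim_obtain_basis by blast
  then have "finite B \<and> W = span B"
    using span_subspace[OF B(3,4)] W by simp
  then show "fin_dim_subspace sc W"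
    unfolding fin_dim_subspace_def by blast
next
  assume "fin_dim_subspace sc W"
  then obtain B where "finite B" "W = span B"
    unfolding fin_dim_subspace_def by blast
  then show "subspace W \<and> fin_dim sc W"
    using fin_dim_finite[of B] by simp
qed

lemma linear_mult_left: "Vector_Spaces.linear sc sc (\<lambda>y. x * y)"
  unfolding Vector_Spaces.linear_iff
  by (simp add: vector_space_axioms distrib_left flip: scale_mult_right)

lemma linear_mult_right: "Vector_Spaces.linear sc sc (\<lambda>y. y * x)"
  unfolding Vector_Spaces.linear_iff
  by (simp add: vector_space_axioms distrib_right flip: scale_mult_left)

lemma dim_mult_left_unit: "x \<in> units \<Longrightarrow> fin_dim sc S \<Longrightarrow> dim ((\<lambda>y. x * y) ` S) = dim S"
  using dim_linear_image_inj[OF linear_mult_left inj_mult_left_unit] .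

lemma dim_mult_right_unit: "x \<in> units \<Longrightarrow> fin_dim sc S \<Longrightarrow> dim ((\<lambda>y. y * x) ` S) = dim S"
  using dim_linear_image_inj[OF linear_mult_right inj_mult_right_unit] .

lemma scale_in_units:
  assumes "u \<in> units" "c \<noteq> 0"
  shows "sc c u \<in> units"
proof -
  obtain u' where "u * u' = 1" "u' * u = 1"
    using assms(1) units_obtain_inverse by blast
  then have "sc c u * sc (inverse c) u' = 1" "sc (inverse c) u' * sc c u = 1"
    using assms(2) by (simp_all flip: scale_mult_left scale_mult_right)
  then show ?thesis
    unfolding units_def by blast
qed

lemma mult_in_span_setprod:
  assumes "x \<in> span A" "y \<in> span B"
  shows "x * y \<in> span (setprod A B)"
proof -
  let ?M = "span (setprod A B)"
  have "subspace {z. a * z \<in> ?M}" for a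
    unfolding subspace_def
    by (auto simp: distrib_left span_zero span_add span_scale simp flip: scale_mult_right)
  then have left: "a * y \<in> ?M" if "a \<in> A" for a
    using span_induct[OF assms(2), of "\<lambda>z. a * z \<in> ?M"] that
    by (auto intro: span_base simp: setprod_def)
  have "subspace {z. z * y \<in> ?M}"
    unfolding subspace_def
    by (auto simp: distrib_right span_zero span_add span_scale simp flip: scale_mult_left)
  then show ?thesis
    using span_induct[OF assms(1), of "\<lambda>z. z * y \<in> ?M"] left by auto
qed

lemma span_setprod_span_left: "span (setprod (span A) B) = span (setprod A B)"
proof (rule span_eq[THEN iffD2, OF conjI])
  show "setprod (span A) B \<subseteq> span (setprod A B)"
  proof
    fix z
    assume "z \<in> setprod (span A) B"
    then obtain a b where "a \<in> span A" "b \<in> B" "z = a * b"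
      unfolding setprod_def by blast
    then show "z \<in> span (setprod A B)"
      using mult_in_span_setprod span_base by simp
  qed
  have "setprod A B \<subseteq> setprod (span A) B"
    using setprod_mono[OF span_superset order_refl] .
  then show "setprod A B \<subseteq> span (setprod (span A) B)"
    using span_superset by blast
qed

lemma fin_dim_setprod:
  assumes "fin_dim sc W" "fin_dim sc X"
  shows "fin_dim sc (setprod W X)"
proof -
  obtain A B where AB: "finite A" "W \<subseteq> span A" "finite B" "X \<subseteq> span B"
    using assms unfolding fin_dim_iff by blast
  have "setprod W X \<subseteq> span (setprod A B)"
  proof
    fix z
    assume "z \<in> setprod W X"
    then obtain a b where "a \<in> W" "b \<in> X" "z = a * b"
      unfolding setprod_def by blast
    then show "z \<in> span (setprod A B)"
      using AB mult_in_span_setprod by blast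
  qed
  then show ?thesis
    unfolding fin_dim_iff using finite_setprod[OF AB(1,3)] by blast
qed

lemma fin_dim_left_stabilizer:
  assumes "fin_dim sc V" "v \<in> V" "v \<in> units"
  shows "fin_dim sc (left_stabilizer V)"
proof -
  obtain v' where v': "v * v' = 1"
    using assms(3) units_obtain_inverse by blast
  have "left_stabilizer V \<subseteq> (\<lambda>z. z * v') ` V"
  proof
    fix h
    assume "h \<in> left_stabilizer V"
    then have "h * v \<in> V"
      using assms(2) unfolding left_stabilizer_def by blast
    moreover have "h = (h * v) * v'"
      by (simp add: mult.assoc v')
    ultimately show "h \<in> (\<lambda>z. z * v') ` V"
      by blast
  qed
  then show ?thesis
    using fin_dim_subset fin_dim_linear_image[OF linear_mult_right assms(1)] by blast
qed

end

section \<open>Connectivity, fragments and atoms\<close>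

locale connectivity = unital_algebra sc for sc :: "'k::field \<Rightarrow> 'a::ring_1 \<Rightarrow> 'a" +
  fixes V :: "'a set" and lam :: real
  assumes fin_dim_subspace_V: "fin_dim_subspace sc V"
    and V_meets_units: "V \<inter> units \<noteq> {}"
    and lam_pos: "0 < lam" and lam_le_1: "lam \<le> 1"
begin

abbreviation prod_span :: "'a set \<Rightarrow> 'a set" where
  "prod_span W \<equiv> span (setprod W V)"

lemma fin_dim_V: "fin_dim sc V"
  using fin_dim_subspace_V fin_dim_subspace_iff by auto

lemma conn_eq: "conn sc lam V W = real (dim (prod_span W)) - lam * real (dim W)"
  unfolding conn_def by simp

lemma admissible_iff: "admissible sc W \<longleftrightarrow> subspace W \<and> fin_dim sc W \<and> W \<inter> units \<noteq> {}"
  unfolding admissible_def fin_dim_subspace_iff by simp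

lemma fin_dim_prod_span: "fin_dim sc W \<Longrightarrow> fin_dim sc (prod_span W)"
  using fin_dim_setprod[OF _ fin_dim_V] by simp

lemma admissible_span_one: "admissible sc (span {1})"
  unfolding admissible_iff using span_base[of 1 "{1}"] fin_dim_finite[of "{1}"] by auto

text \<open>Multiplying by a unit of \<open>W\<close> (on the left of \<open>V\<close>) or of \<open>V\<close> (on the right of \<open>W\<close>)
  embeds both \<open>V\<close> and \<open>W\<close> into \<open>span (WV)\<close>.\<close>

lemma dim_le_dim_prod_span:
  assumes "admissible sc W"
  shows "dim W \<le> dim (prod_span W)" "dim V \<le> dim (prod_span W)"
proof -
  obtain w where w: "w \<in> W" "w \<in> units"
    using assms admissible_iff by blast
  obtain v where v: "v \<in> V" "v \<in> units"
    using V_meets_units by blast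
  have fW: "fin_dim sc W" and fP: "fin_dim sc (prod_span W)"
    using assms admissible_iff fin_dim_prod_span by auto
  have "(\<lambda>z. z * v) ` W \<subseteq> setprod W V"
    using v(1) unfolding setprod_def by blast
  then have "(\<lambda>z. z * v) ` W \<subseteq> span (prod_span W)"
    unfolding span_span using span_superset by (rule subset_trans)
  then have "dim ((\<lambda>z. z * v) ` W) \<le> dim (prod_span W)"
    by (rule dim_le_if_subset_span[OF fP])
  then show "dim W \<le> dim (prod_span W)"
    using dim_mult_right_unit[OF v(2) fW] by simp
  have "(\<lambda>z. w * z) ` V \<subseteq> setprod W V"
    using w(1) unfolding setprod_def by blast
  then have "(\<lambda>z. w * z) ` V \<subseteq> span (prod_span W)"
    unfolding span_span using span_superset by (rule subset_trans)
  then have "dim ((\<lambda>z. w * z) ` V) \<le> dim (prod_span W)"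
    by (rule dim_le_if_subset_span[OF fP])
  then show "dim V \<le> dim (prod_span W)"
    using dim_mult_left_unit[OF w(2) fin_dim_V] by simp
qed

text \<open>Since \<open>dim W \<le> dim (span (WV))\<close> and \<open>lam \<le> 1\<close>, only finitely many connectivity
  values lie below any bound: for \<open>lam < 1\<close> the bound caps \<open>dim W\<close>, for \<open>lam = 1\<close>
  the values are integers.\<close>

lemma finite_conn_values_le:
  "finite {c \<in> conn sc lam V ` {W. admissible sc W}. c \<le> b}"
proof (cases "lam = 1")
  case True
  have "{c \<in> conn sc lam V ` {W. admissible sc W}. c \<le> b} \<subseteq> real ` {..nat \<lceil>b\<rceil>}"
  proof clarify
    fix W
    assume W: "admissible sc W" "conn sc lam V W \<le> b"
    have "conn sc lam V W = real (dim (prod_span W) - dim W)"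
      using dim_le_dim_prod_span(1)[OF W(1)] True conn_eq by (simp add: of_nat_diff)
    with W(2) show "conn sc lam V W \<in> real ` {..nat \<lceil>b\<rceil>}"
      by (auto intro!: image_eqI simp: le_nat_iff) linarith
  qed
  then show ?thesis
    by (rule finite_subset) simp
next
  case False
  then have lam_less_1: "lam < 1"
    using lam_le_1 by simp
  define N where "N = nat \<lceil>b / (1 - lam)\<rceil> + nat \<lceil>b\<rceil>"
  have "{c \<in> conn sc lam V ` {W. admissible sc W}. c \<le> b}
      \<subseteq> (\<lambda>(m, n). real m - lam * real n) ` ({..N} \<times> {..N})"
  proof clarify
    fix W
    assume W: "admissible sc W" "conn sc lam V W \<le> b"
    have le: "real (dim (prod_span W)) - lam * real (dim W) \<le> b"
      using W(2) conn_eq by simp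
    have "dim W \<le> dim (prod_span W)"
      using dim_le_dim_prod_span(1)[OF W(1)] .
    then have "(1 - lam) * real (dim W) \<le> b"
      using le by (simp add: algebra_simps)
    then have dW: "real (dim W) \<le> b / (1 - lam)"
      using lam_less_1 by (simp add: field_simps mult.commute)
    have "real (dim (prod_span W)) \<le> b + real (dim W)"
      using le lam_le_1 mult_right_mono[of lam 1 "real (dim W)"] by simp
    with dW have "dim W \<le> N" "dim (prod_span W) \<le> N"
      unfolding N_def by linarith+
    then show "conn sc lam V W \<in> (\<lambda>(m, n). real m - lam * real n) ` ({..N} \<times> {..N})"
      using conn_eq by (intro image_eqI[of _ _ "(dim (prod_span W), dim W)"]) auto
  qed
  then show ?thesis
    by (rule finite_subset) simp
qed

lemma conn_attains_min:
  "\<exists>W0. admissible sc W0 \<and> (\<forall>W. admissible sc W \<longrightarrow> conn sc lam V W0 \<le> conn sc lam V W)"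
proof -
  define b where "b = conn sc lam V (span {1})"
  define F where "F = {c \<in> conn sc lam V ` {W. admissible sc W}. c \<le> b}"
  have fin: "finite F"
    unfolding F_def by (rule finite_conn_values_le)
  have "b \<in> F"
    using admissible_span_one unfolding F_def b_def by blast
  then have "Min F \<in> conn sc lam V ` {W. admissible sc W}"
    using Min_in[OF fin] unfolding F_def by blast
  then obtain W0 where W0: "admissible sc W0" "conn sc lam V W0 = Min F"
    by (metis imageE mem_Collect_eq)
  have "conn sc lam V W0 \<le> conn sc lam V W" if W: "admissible sc W" for W
  proof (cases "conn sc lam V W \<le> b")
    case True
    then have "conn sc lam V W \<in> F"
      using W unfolding F_def by blast
    then show ?thesis
      using Min_le[OF fin] W0(2) by simp
  next
    case False
    then show ?thesis
      using Min_le[OF fin \<open>b \<in> F\<close>] W0(2) by simp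
  qed
  with W0 show ?thesis
    by blast
qed

lemma kappa_le_conn: "admissible sc W \<Longrightarrow> kappa sc lam V \<le> conn sc lam V W"
  unfolding kappa_def by (rule cInf_lower) (use conn_attains_min in \<open>auto intro: bdd_belowI2\<close>)

lemma fragment_exists: "\<exists>W. fragment sc lam V W"
proof -
  obtain W0 where W0: "admissible sc W0" "\<And>W. admissible sc W \<Longrightarrow> conn sc lam V W0 \<le> conn sc lam V W"
    using conn_attains_min by blast
  then have "kappa sc lam V = conn sc lam V W0"
    unfolding kappa_def by (intro cInf_eq_minimum) auto
  with W0(1) show ?thesis
    unfolding fragment_def by auto
qed

lemma atom_exists: "\<exists>A. atom sc lam V A"
  using ex_has_least_nat[of "fragment sc lam V" _ dim] fragment_exists unfolding atom_def by blast

lemma fragment_imp_admissible: "fragment sc lam V W \<Longrightarrow> admissible sc W"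
  unfolding fragment_def by blast

lemma atom_imp_fragment: "atom sc lam V W \<Longrightarrow> fragment sc lam V W"
  unfolding atom_def by blast

lemma admissible_mult_left:
  assumes "x \<in> units" "admissible sc W"
  shows "admissible sc ((\<lambda>h. x * h) ` W)"
proof -
  interpret vector_space_pair sc sc ..
  obtain w where "w \<in> W" "w \<in> units"
    using assms(2) admissible_iff by blast
  then have "x * w \<in> (\<lambda>h. x * h) ` W \<inter> units"
    using units_mult[OF assms(1)] by blast
  then show ?thesis
    using assms(2) linear_subspace_image[OF linear_mult_left] fin_dim_linear_image[OF linear_mult_left]
    unfolding admissible_iff by blast
qed

lemma conn_mult_left:
  assumes "x \<in> units" "admissible sc W"
  shows "conn sc lam V ((\<lambda>h. x * h) ` W) = conn sc lam V W"
proof -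
  interpret vector_space_pair sc sc ..
  have fW: "fin_dim sc W"
    using assms(2) admissible_iff by blast
  have "prod_span ((\<lambda>h. x * h) ` W) = (\<lambda>h. x * h) ` prod_span W"
    unfolding setprod_image_mult_left using linear_span_image[OF linear_mult_left] by simp
  then show ?thesis
    unfolding conn_eq
    using dim_mult_left_unit[OF assms(1) fW] dim_mult_left_unit[OF assms(1) fin_dim_prod_span[OF fW]]
    by simp
qed

lemma atom_mult_left:
  assumes "x \<in> units" "atom sc lam V W"
  shows "atom sc lam V ((\<lambda>h. x * h) ` W)"
proof -
  have "admissible sc W"
    using assms(2) fragment_imp_admissible atom_imp_fragment by blast
  then show ?thesis
    using assms admissible_mult_left conn_mult_left dim_mult_left_unit admissible_iff
    unfolding atom_def fragment_def by metis
qed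

text \<open>Submodularity: Grassmann's formula for \<open>W1, W2\<close> and for \<open>span (W1 V), span (W2 V)\<close>,
  together with \<open>span (W1 V) \<inter> span (W2 V) \<supseteq> span ((W1 \<inter> W2) V)\<close>.\<close>

lemma conn_submodular:
  assumes sW: "subspace W1" "subspace W2" and fW: "fin_dim sc W1" "fin_dim sc W2"
  shows "conn sc lam V (span (W1 \<union> W2)) + conn sc lam V (W1 \<inter> W2)
    \<le> conn sc lam V W1 + conn sc lam V W2"
proof -
  have fP: "fin_dim sc (prod_span W1)" "fin_dim sc (prod_span W2)"
    using fin_dim_prod_span fW by auto
  have "prod_span (span (W1 \<union> W2)) = span (prod_span W1 \<union> prod_span W2)"
    unfolding span_setprod_span_left setprod_Un_left by (simp add: span_Un span_span)
  then have sum: "dim (prod_span (span (W1 \<union> W2))) + dim (prod_span W1 \<inter> prod_span W2)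
      = dim (prod_span W1) + dim (prod_span W2)"
    using dim_span_Un_add_dim_Int[OF subspace_span subspace_span fP] by simp
  have "prod_span (W1 \<inter> W2) \<subseteq> prod_span W1 \<inter> prod_span W2"
    using span_mono setprod_mono by (metis Int_lower1 Int_lower2 Int_greatest order_refl)
  then have "dim (prod_span (W1 \<inter> W2)) \<le> dim (prod_span W1 \<inter> prod_span W2)"
    using dim_le_if_subset_span[OF fin_dim_subset[OF Int_lower1 fP(1)]] span_superset
    by (meson subset_trans)
  moreover have "dim (span (W1 \<union> W2)) + dim (W1 \<inter> W2) = dim W1 + dim W2"
    using dim_span_Un_add_dim_Int[OF sW fW] .
  ultimately show ?thesis
    using sum lam_pos unfolding conn_eq
    by (smt (verit) distrib_left of_nat_add of_nat_mono)
qed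

lemma fragment_Int:
  assumes F: "fragment sc lam V W1" "fragment sc lam V W2" and u: "u \<in> W1 \<inter> W2" "u \<in> units"
  shows "fragment sc lam V (W1 \<inter> W2)"
proof -
  have W: "subspace W1" "subspace W2" "fin_dim sc W1" "fin_dim sc W2"
    using F fragment_imp_admissible admissible_iff by auto
  then have "admissible sc (W1 \<inter> W2)" "admissible sc (span (W1 \<union> W2))"
    unfolding admissible_iff using u span_base[of u "W1 \<union> W2"] fin_dim_subset[OF Int_lower1 W(3)]
    by (auto intro: subspace_inter)
  then show ?thesis
    using conn_submodular[OF W] kappa_le_conn F unfolding fragment_def
    by (smt (verit, best))
qed

lemma atom_eq_if_common_unit:
  assumes A: "atom sc lam V A1" "atom sc lam V A2" and u: "u \<in> A1 \<inter> A2" "u \<in> units"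
  shows "A1 = A2"
proof -
  have fragment: "fragment sc lam V (A1 \<inter> A2)"
    using fragment_Int[OF atom_imp_fragment atom_imp_fragment] A u by blast
  have "A1 \<inter> A2 = A" if "A = A1 \<or> A = A2" for A
  proof (rule subspace_eq_if_dim_le)
    have "admissible sc A" "admissible sc (A1 \<inter> A2)"
      using that A fragment atom_imp_fragment fragment_imp_admissible by blast+
    then show "fin_dim sc A" "subspace (A1 \<inter> A2)" "subspace A"
      using admissible_iff by blast+
    show "A1 \<inter> A2 \<subseteq> A" "dim A \<le> dim (A1 \<inter> A2)"
      using that A fragment unfolding atom_def by auto
  qed
  then show ?thesis
    by blast
qed

lemma atom_containing_one_exists: "\<exists>H. atom sc lam V H \<and> 1 \<in> H"
proof -
  obtain A where A: "atom sc lam V A"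
    using atom_exists by blast
  then obtain u where u: "u \<in> A" "u \<in> units"
    using atom_imp_fragment fragment_imp_admissible admissible_iff by blast
  then obtain u' where u': "u' \<in> units" "u' * u = 1"
    using units_obtain_inverse by metis
  then have "1 \<in> (\<lambda>h. u' * h) ` A"
    using u(1) by force
  with atom_mult_left[OF u'(1) A] show ?thesis
    by blast
qed

lemma dim_prod_span_lower_bound:
  assumes "fragment sc lam V H" "admissible sc W"
  shows "real (dim (prod_span W)) \<ge> lam * real (dim W) + real (dim V) - lam * real (dim H)"
  using assms kappa_le_conn[OF assms(2)] dim_le_dim_prod_span(2)[OF fragment_imp_admissible]
  unfolding fragment_def conn_eq by force

text \<open>This is where \<open>lam > 0\<close> is needed.\<close>

lemma fragment_eq_if_prod_span_subset:
  assumes H: "fragment sc lam V H" and W: "admissible sc W"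
    and "H \<subseteq> W" and "prod_span W \<subseteq> prod_span H"
  shows "W = H"
proof -
  have sH: "subspace H" "fin_dim sc H" and sW: "subspace W" "fin_dim sc W"
    using H W fragment_imp_admissible admissible_iff by auto
  have "dim (prod_span W) \<le> dim (prod_span H)"
    using assms(4) dim_le_if_subset_span[OF fin_dim_prod_span[OF sH(2)]] span_superset
    by (meson subset_trans)
  moreover have "conn sc lam V H \<le> conn sc lam V W"
    using H kappa_le_conn[OF W] unfolding fragment_def by simp
  ultimately have "lam * real (dim W) \<le> lam * real (dim H)"
    unfolding conn_eq by linarith
  then have "dim W \<le> dim H"
    using lam_pos by simp
  then show ?thesis
    using subspace_eq_if_dim_le[OF sW(2) sH(1) sW(1) assms(3)] by simp
qed

lemma left_stabilizer_subset_atom: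
  assumes H: "atom sc lam V H" "1 \<in> H"
  shows "left_stabilizer V \<subseteq> H"
proof -
  define S where "S = left_stabilizer V"
  have "fin_dim sc S"
    unfolding S_def using fin_dim_left_stabilizer[OF fin_dim_V] V_meets_units by blast
  have FH: "fragment sc lam V H"
    using H(1) atom_imp_fragment by blast
  then have sH: "subspace H" "fin_dim sc H"
    using fragment_imp_admissible admissible_iff by auto
  have W: "admissible sc (span (H \<union> S))"
    unfolding admissible_iff using \<open>fin_dim sc S\<close> sH(2) span_base[of 1 "H \<union> S"] H(2) by auto
  have "setprod S V \<subseteq> V"
    unfolding S_def left_stabilizer_def setprod_def by blast
  also have "V \<subseteq> setprod H V"
    using H(2) unfolding setprod_def by force
  finally have "setprod (H \<union> S) V \<subseteq> prod_span H"
    unfolding setprod_Un_left using span_superset by blast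
  then have "prod_span (span (H \<union> S)) \<subseteq> prod_span H"
    unfolding span_setprod_span_left by (simp add: span_minimal)
  then have "span (H \<union> S) = H"
    using fragment_eq_if_prod_span_subset[OF FH W] span_superset by blast
  then show ?thesis
    using span_superset unfolding S_def by blast
qed

text \<open>If the line \<open>1 + k x\<close> through \<open>x \<in> H\<close> contains a unit \<open>g\<close>, then \<open>gH\<close> is an atom
  meeting \<open>H\<close> in the unit \<open>g\<close>, hence \<open>gH = H\<close>; so \<open>gy = y + c xy \<in> H\<close> for \<open>y \<in> H\<close>.\<close>

lemma atom_mult_closed:
  assumes lines: "lines_meet_units sc" and H: "atom sc lam V H" "1 \<in> H"
    and xy: "x \<in> H" "y \<in> H"
  shows "x * y \<in> H"
proof -
  have sH: "subspace H"
    using H(1) atom_imp_fragment fragment_imp_admissible admissible_iff by blast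
  obtain c where c: "c \<noteq> 0" "1 + sc c x \<in> units"
    using lines unfolding lines_meet_units_def by blast
  define g where "g = 1 + sc c x"
  have "g \<in> H"
    unfolding g_def using H(2) xy(1) sH subspace_add subspace_scale by blast
  then have "(\<lambda>h. g * h) ` H = H"
    using atom_eq_if_common_unit[OF atom_mult_left[OF c(2)[folded g_def] H(1)] H(1)] H(2) c(2)
    unfolding g_def by force
  then have "g * y \<in> H"
    using xy(2) by blast
  moreover have "g * y = y + sc c (x * y)"
    unfolding g_def by (simp add: distrib_right scale_mult_left)
  ultimately have "sc c (x * y) \<in> H"
    using xy(2) sH subspace_diff by (metis add_diff_cancel_left')
  then have "sc (inverse c) (sc c (x * y)) \<in> H"
    using sH subspace_scale by blast
  then show ?thesis
    using c(1) by simp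
qed

lemma atom_subalgebra:
  assumes "lines_meet_units sc" "atom sc lam V H" "1 \<in> H"
  shows "subalgebra sc H"
  unfolding subalgebra_def
  using assms atom_mult_closed atom_imp_fragment fragment_imp_admissible admissible_iff by blast

lemma atom_meets_units_iff_translate:
  assumes H: "atom sc lam V H" "1 \<in> H"
  shows "atom sc lam V W \<and> W \<inter> units \<noteq> {} \<longleftrightarrow> (\<exists>x\<in>units. W = (\<lambda>h. x * h) ` H)"
proof
  assume W: "atom sc lam V W \<and> W \<inter> units \<noteq> {}"
  then obtain w w' where w: "w \<in> W" "w \<in> units" "w' \<in> units" "w * w' = 1" "w' * w = 1"
    using units_obtain_inverse by (metis IntE ex_in_conv)
  then have "1 \<in> (\<lambda>h. w' * h) ` W \<inter> H"
    using H(2) by force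
  then have "(\<lambda>h. w' * h) ` W = H"
    using atom_eq_if_common_unit[OF atom_mult_left[OF w(3)] H(1) _ one_in_units] W by blast
  then have "W = (\<lambda>h. w * h) ` H"
    using image_mult_left_cancel[OF w(4), of W] by simp
  with w(2) show "\<exists>x\<in>units. W = (\<lambda>h. x * h) ` H"
    by blast
next
  assume "\<exists>x\<in>units. W = (\<lambda>h. x * h) ` H"
  then obtain x where x: "x \<in> units" "W = (\<lambda>h. x * h) ` H"
    by blast
  then have "x \<in> W \<inter> units"
    using H(2) by force
  with x atom_mult_left[OF x(1) H(1)] show "atom sc lam V W \<and> W \<inter> units \<noteq> {}"
    by blast
qed

end

section \<open>Hypothesis \<open>H\<^sub>s\<close>: every line through \<open>1\<close> meets the units\<close>

lemma geometric_sum_atLeastLessThan_le: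
  fixes r :: real
  assumes "0 \<le> r" "r < 1" "n \<le> m"
  shows "(\<Sum>i\<in>{n..<m}. r ^ i) \<le> r ^ n / (1 - r)"
proof -
  have "(\<Sum>i\<in>{n..<m}. r ^ i) = (\<Sum>i<m. r ^ i) - (\<Sum>i<n. r ^ i)"
    using sum_diff_nat_ivl[of 0 n m "\<lambda>i. r ^ i"] assms(3) by (simp add: lessThan_atLeast0)
  also have "\<dots> = (r ^ n - r ^ m) / (1 - r)"
    using assms(2) by (simp add: sum_gp_strict diff_divide_distrib[symmetric])
  also have "\<dots> \<le> r ^ n / (1 - r)"
    using assms(1,2) by (simp add: divide_right_mono)
  finally show ?thesis .
qed

lemma one_minus_mult_sum_power:
  fixes p :: "'a::ring_1"
  shows "(1 - p) * (\<Sum>i<n. p ^ i) = 1 - p ^ n" "(\<Sum>i<n. p ^ i) * (1 - p) = 1 - p ^ n"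
proof (induction n)
  case (Suc n)
  have "(1 - p) * (\<Sum>i<Suc n. p ^ i) = (1 - p) * (\<Sum>i<n. p ^ i) + (1 - p) * p ^ n"
    "(\<Sum>i<Suc n. p ^ i) * (1 - p) = (\<Sum>i<n. p ^ i) * (1 - p) + p ^ n * (1 - p)"
    by (simp_all add: distrib_left distrib_right)
  with Suc show "(1 - p) * (\<Sum>i<Suc n. p ^ i) = 1 - p ^ Suc n"
    "(\<Sum>i<Suc n. p ^ i) * (1 - p) = 1 - p ^ Suc n"
    by (simp_all add: algebra_simps power_commutes)
qed simp_all

lemma field_iso_simps:
  assumes "field_iso (\<phi> :: 'k::field \<Rightarrow> 'f::field)"
  shows "\<phi> 0 = 0" "\<phi> (- 1) = - 1" "surj \<phi>"
proof -
  have add: "\<And>a b. \<phi> (a + b) = \<phi> a + \<phi> b" and one: "\<phi> 1 = 1"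
    using assms unfolding field_iso_def by auto
  show zero: "\<phi> 0 = 0"
    using add[of 0 0] by (metis add_0 add_cancel_right_right)
  show "\<phi> (- 1) = - 1"
    using add[of "- 1" 1] zero one by (simp add: eq_neg_iff_add_eq_0)
  show "surj \<phi>"
    using assms unfolding field_iso_def bij_def by blast
qed

context unital_algebra
begin

lemma banach_norm_zero:
  assumes "banach_norm sc av N"
  shows "N 0 = 0"
  using assms unfolding banach_norm_def by blast

lemma banach_norm_minus_nonneg:
  assumes bn: "banach_norm sc av N" and av: "av (- 1) = 1"
  shows "N (- x) = N x" "0 \<le> N x"
proof -
  have hom: "N (sc (- 1) x) = av (- 1) * N x"
    and tri: "N (x + - x) \<le> N x + N (- x)"
    using bn unfolding banach_norm_def by blast+
  from hom show minus: "N (- x) = N x"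
    using av by simp
  from tri show "0 \<le> N x"
    using minus banach_norm_zero[OF bn] by simp
qed

lemma banach_norm_sum_le:
  assumes "banach_norm sc av N" "finite A"
  shows "N (\<Sum>i\<in>A. f i) \<le> (\<Sum>i\<in>A. N (f i))"
  using assms(2)
proof (induction A rule: finite_induct)
  case empty
  then show ?case
    using banach_norm_zero[OF assms(1)] by simp
next
  case (insert a A)
  then show ?case
    using assms(1) unfolding banach_norm_def by (smt (verit) sum.insert)
qed

lemma banach_norm_power_le:
  assumes bn: "banach_norm sc av N" and av: "av (- 1) = 1"
  shows "N (p ^ n) \<le> N 1 * N p ^ n"
proof (induction n)
  case (Suc n)
  have "N (p ^ Suc n) \<le> N p * N (p ^ n)"
    using bn unfolding banach_norm_def by simp
  also have "\<dots> \<le> N p * (N 1 * N p ^ n)"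
    using Suc banach_norm_minus_nonneg(2)[OF bn av] by (rule mult_left_mono)
  finally show ?case
    by (simp add: algebra_simps)
qed simp

lemma neumann_tail_le:
  assumes bn: "banach_norm sc av N" and av: "av (- 1) = 1" and Np: "N p < 1" and "n \<le> m"
  shows "N ((\<Sum>i<m. p ^ i) - (\<Sum>i<n. p ^ i)) \<le> N 1 * N p ^ n / (1 - N p)"
proof -
  note Nnonneg = banach_norm_minus_nonneg(2)[OF bn av]
  have "(\<Sum>i<m. p ^ i) - (\<Sum>i<n. p ^ i) = (\<Sum>i\<in>{n..<m}. p ^ i)"
    using sum_diff_nat_ivl[of 0 n m "\<lambda>i. p ^ i"] assms(4) by (simp add: lessThan_atLeast0)
  then have "N ((\<Sum>i<m. p ^ i) - (\<Sum>i<n. p ^ i)) = N (\<Sum>i\<in>{n..<m}. p ^ i)"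
    by simp
  also have "\<dots> \<le> (\<Sum>i\<in>{n..<m}. N (p ^ i))"
    using banach_norm_sum_le[OF bn finite_atLeastLessThan] .
  also have "\<dots> \<le> N 1 * (\<Sum>i\<in>{n..<m}. N p ^ i)"
    unfolding sum_distrib_left using banach_norm_power_le[OF bn av] by (rule sum_mono)
  also have "\<dots> \<le> N 1 * (N p ^ n / (1 - N p))"
    using geometric_sum_atLeastLessThan_le[OF Nnonneg Np assms(4)] Nnonneg by (rule mult_left_mono)
  finally show ?thesis
    by simp
qed

lemma neumann_series_converges:
  assumes bn: "banach_norm sc av N" and av: "av (- 1) = 1" and Np: "N p < 1"
  obtains L where "(\<lambda>n. N ((\<Sum>i<n. p ^ i) - L)) \<longlonglongrightarrow> 0"
proof -
  define S where "S n = (\<Sum>i<n. p ^ i)" for n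
  note Nminus = banach_norm_minus_nonneg(1)[OF bn av]
    and Nnonneg = banach_norm_minus_nonneg(2)[OF bn av]
  have tail_lim: "(\<lambda>n. N 1 * N p ^ n / (1 - N p)) \<longlonglongrightarrow> 0"
    using Np Nnonneg[of p] by (auto intro!: tendsto_eq_intros LIMSEQ_realpow_zero)
  have tail: "\<exists>M. \<forall>n\<ge>M. N 1 * N p ^ n / (1 - N p) < e" if "0 < e" for e
    using order_tendstoD(2)[OF tail_lim that] unfolding eventually_sequentially .
  have "\<exists>M. \<forall>m\<ge>M. \<forall>n\<ge>M. N (S m - S n) < e" if e: "0 < e" for e
  proof -
    obtain M where M: "\<And>n. n \<ge> M \<Longrightarrow> N 1 * N p ^ n / (1 - N p) < e"
      using tail[OF e] by blast
    have "N (S m - S n) < e" if "m \<ge> M" "n \<ge> M" for m n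
    proof (cases "n \<le> m")
      case True
      then show ?thesis
        using neumann_tail_le[OF bn av Np True] M[OF that(2)] unfolding S_def by simp
    next
      case False
      then show ?thesis
        using neumann_tail_le[OF bn av Np, of m n] M[OF that(1)] Nminus[of "S m - S n"]
        unfolding S_def by simp
    qed
    then show ?thesis
      by blast
  qed
  then obtain L where "\<And>e. e > 0 \<Longrightarrow> \<exists>M. \<forall>n\<ge>M. N (S n - L) < e"
    using bn unfolding banach_norm_def by blast
  then have "(\<lambda>n. N (S n - L)) \<longlonglongrightarrow> 0"
    using Nnonneg by (intro metric_LIMSEQ_I) simp
  with that show ?thesis
    unfolding S_def by blast
qed

text \<open>The limit \<open>L\<close> of the Neumann series inverts \<open>1 - p\<close> on both sides:
  \<open>(1 - p) L - 1 = (1 - p) (L - S\<^sub>n) - p\<^sup>n\<close>, whose norm tends to \<open>0\<close>.\<close>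

lemma one_minus_in_units_if_norm_less_one:
  assumes bn: "banach_norm sc av N" and av: "av (- 1) = 1" and Np: "N p < 1"
  shows "1 - p \<in> units"
proof -
  define S where "S n = (\<Sum>i<n. p ^ i)" for n
  obtain L where L: "(\<lambda>n. N (S n - L)) \<longlonglongrightarrow> 0"
    using neumann_series_converges[OF bn av Np] unfolding S_def by blast
  have N0: "\<And>x. N x = 0 \<longleftrightarrow> x = 0" and tri: "\<And>x y. N (x + y) \<le> N x + N y"
    and sub: "\<And>x y. N (x * y) \<le> N x * N y"
    using bn unfolding banach_norm_def by blast+
  note Nminus = banach_norm_minus_nonneg(1)[OF bn av]
    and Nnonneg = banach_norm_minus_nonneg(2)[OF bn av]
    and pow = banach_norm_power_le[OF bn av, of p]
  have bound_lim: "(\<lambda>n. N (1 - p) * N (S n - L) + N 1 * N p ^ n) \<longlonglongrightarrow> 0"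
    using L Np Nnonneg[of p] by (auto intro!: tendsto_eq_intros LIMSEQ_realpow_zero)
  have zero: "x = 0" if "\<And>n. N x \<le> N (1 - p) * N (S n - L) + N 1 * N p ^ n" for x
  proof -
    have "N x \<le> 0"
      using that by (intro LIMSEQ_le_const[OF bound_lim]) auto
    then show "x = 0"
      using N0 Nnonneg[of x] by simp
  qed
  have "(1 - p) * L - 1 = 0"
  proof (rule zero)
    fix n
    have "(1 - p) * L - 1 = (1 - p) * - (S n - L) + - (p ^ n)"
      using one_minus_mult_sum_power(1)[of p n] unfolding S_def by (simp add: algebra_simps)
    then show "N ((1 - p) * L - 1) \<le> N (1 - p) * N (S n - L) + N 1 * N p ^ n"
      using tri sub[of "1 - p" "- (S n - L)"] pow[of n] Nminus by (smt (verit))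
  qed
  moreover have "L * (1 - p) - 1 = 0"
  proof (rule zero)
    fix n
    have "L * (1 - p) - 1 = - (S n - L) * (1 - p) + - (p ^ n)"
      using one_minus_mult_sum_power(2)[of p n] unfolding S_def by (simp add: algebra_simps)
    then show "N (L * (1 - p) - 1) \<le> N (1 - p) * N (S n - L) + N 1 * N p ^ n"
      using tri sub[of "- (S n - L)" "1 - p"] pow[of n] Nminus by (smt (verit) mult.commute)
  qed
  ultimately show ?thesis
    unfolding units_def by auto
qed

lemma lines_meet_units_if_banach_norm:
  assumes bn: "banach_norm sc av N" and av: "av (- 1) = 1"
    and av_onto: "\<And>r. r > 0 \<Longrightarrow> \<exists>c. c \<noteq> 0 \<and> av c = r"
  shows "lines_meet_units sc"
  unfolding lines_meet_units_def
proof
  fix h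
  note Nnonneg = banach_norm_minus_nonneg(2)[OF bn av]
  have "1 / (N h + 1) > 0"
    using Nnonneg[of h] by simp
  then obtain c where c: "c \<noteq> 0" "av c = 1 / (N h + 1)"
    using av_onto by blast
  have "N (- sc c h) = N h / (N h + 1)"
    using bn c(2) banach_norm_minus_nonneg(1)[OF bn av] unfolding banach_norm_def by simp
  also have "\<dots> < 1"
    using Nnonneg[of h] by simp
  finally have "1 - (- sc c h) \<in> units"
    by (rule one_minus_in_units_if_norm_less_one[OF bn av])
  with c(1) show "\<exists>c. c \<noteq> 0 \<and> 1 + sc c h \<in> units"
    by auto
qed

lemma lines_meet_units_if_real_banach:
  assumes "field_iso (\<phi> :: 'k \<Rightarrow> real)" "banach_norm sc (\<lambda>c. \<bar>\<phi> c\<bar>) N"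
  shows "lines_meet_units sc"
proof (rule lines_meet_units_if_banach_norm[OF assms(2)])
  show "\<bar>\<phi> (- 1)\<bar> = 1"
    using field_iso_simps[OF assms(1)] by simp
  fix r :: real
  assume "r > 0"
  moreover obtain c where "\<phi> c = r"
    using field_iso_simps(3)[OF assms(1)] by (metis surjD)
  moreover have "c \<noteq> 0"
    using calculation field_iso_simps(1)[OF assms(1)] by auto
  ultimately show "\<exists>c. c \<noteq> 0 \<and> \<bar>\<phi> c\<bar> = r"
    by auto
qed

lemma lines_meet_units_if_complex_banach:
  assumes "field_iso (\<phi> :: 'k \<Rightarrow> complex)" "banach_norm sc (\<lambda>c. cmod (\<phi> c)) N"
  shows "lines_meet_units sc"
proof (rule lines_meet_units_if_banach_norm[OF assms(2)])
  show "cmod (\<phi> (- 1)) = 1"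
    using field_iso_simps[OF assms(1)] by simp
  fix r :: real
  assume "r > 0"
  moreover obtain c where "\<phi> c = complex_of_real r"
    using field_iso_simps(3)[OF assms(1)] by (metis surjD)
  moreover have "c \<noteq> 0"
    using calculation field_iso_simps(1)[OF assms(1)] by auto
  ultimately show "\<exists>c. c \<noteq> 0 \<and> cmod (\<phi> c) = r"
    by auto
qed

end

lemma unit_if_idempotent_components_nonzero:
  fixes e :: "nat \<Rightarrow> 'a::ring_1"
  assumes comm: "\<And>x y :: 'a. x * y = y * x"
    and sum: "(\<Sum>i<n. e i) = 1" and idem: "\<And>i. i < n \<Longrightarrow> e i * e i = e i"
    and field: "\<And>i x. i < n \<Longrightarrow> e i * x \<noteq> 0 \<Longrightarrow> \<exists>y. (e i * x) * (e i * y) = e i"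
    and nonzero: "\<And>i. i < n \<Longrightarrow> e i * a \<noteq> 0"
  shows "a \<in> units"
proof -
  have "\<forall>i<n. \<exists>y. (e i * a) * (e i * y) = e i"
    using field nonzero by blast
  then obtain y where y: "\<And>i. i < n \<Longrightarrow> (e i * a) * (e i * y i) = e i"
    by metis
  have "a * (e i * y i) = e i" if "i < n" for i
  proof -
    have "(e i * a) * (e i * y i) = (e i * e i) * (a * y i)"
      using comm by (metis mult.assoc)
    also have "\<dots> = a * (e i * y i)"
      using idem[OF that] comm by (metis mult.assoc)
    finally show ?thesis
      using y[OF that] by simp
  qed
  then have "a * (\<Sum>i<n. e i * y i) = 1"
    using sum by (simp add: sum_distrib_left)
  moreover have "(\<Sum>i<n. e i * y i) * a = a * (\<Sum>i<n. e i * y i)"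
    by (rule comm)
  ultimately show ?thesis
    unfolding units_def by auto
qed

lemma (in unital_algebra) lines_meet_units_if_product_of_fields:
  fixes e :: "nat \<Rightarrow> 'a"
  assumes inf: "infinite (UNIV :: 'k set)" and comm: "\<And>x y :: 'a. x * y = y * x"
    and sum: "(\<Sum>i<n. e i) = 1" and idem: "\<And>i. i < n \<Longrightarrow> e i * e i = e i"
    and field: "\<And>i x. i < n \<Longrightarrow> e i * x \<noteq> 0 \<Longrightarrow> \<exists>y. (e i * x) * (e i * y) = e i"
    and nonzero: "\<And>i. i < n \<Longrightarrow> e i \<noteq> 0"
  shows "lines_meet_units sc"
  unfolding lines_meet_units_def
proof
  fix h
  define B where "B = (\<Union>i<n. {c. e i + sc c (e i * h) = 0})"
  have "finite {c. e i + sc c (e i * h) = 0}" if "i < n" for i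
  proof (rule finite_subset[of _ "{THE c. e i + sc c (e i * h) = 0}"])
    have "c = c'" if "e i + sc c (e i * h) = 0" "e i + sc c' (e i * h) = 0" for c c'
    proof -
      have "sc c (e i * h) = sc c' (e i * h)"
        using that by (metis add_left_cancel)
      moreover have "e i * h \<noteq> 0"
        using that(1) nonzero[OF \<open>i < n\<close>] by auto
      ultimately show "c = c'"
        by simp
    qed
    then show "{c. e i + sc c (e i * h) = 0} \<subseteq> {THE c. e i + sc c (e i * h) = 0}"
      by (auto intro: the_equality[symmetric])
  qed simp
  then have "finite (insert 0 B)"
    unfolding B_def by auto
  then obtain c where c: "c \<notin> insert 0 B"
    using ex_new_if_finite[OF inf] by blast
  have "e i * (1 + sc c h) \<noteq> 0" if "i < n" for i
    using c that unfolding B_def by (auto simp: distrib_left scale_mult_right)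
  then have "1 + sc c h \<in> units"
    using unit_if_idempotent_components_nonzero[OF comm sum idem field] by blast
  with c show "\<exists>c. c \<noteq> 0 \<and> 1 + sc c h \<in> units"
    by blast
qed

context unital_algebra
begin

lemma unit_if_inj_mult_left:
  fixes a :: 'a
  assumes fin: "fin_dim sc (UNIV :: 'a set)" and inj: "inj (\<lambda>x. a * x)"
  shows "a \<in> units"
proof -
  obtain B where B: "finite B" "independent B" "B \<subseteq> UNIV" "UNIV \<subseteq> span B"
    "card B = dim (UNIV :: 'a set)"
    by (rule fin_dim_obtain_basis[OF fin])
  interpret fdv: finite_dimensional_vector_space sc B
    using B by unfold_locales auto
  obtain y where y: "a * y = 1"
    using fdv.linear_inj_imp_surj[OF linear_mult_left inj] by (metis surjD)
  have "a * (y * a) = a * 1"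
    using y by (simp flip: mult.assoc)
  then have "y * a = 1"
    by (rule injD[OF inj])
  with y show ?thesis
    unfolding units_def by blast
qed

text \<open>If \<open>h - t\<close> is not a unit, then \<open>t\<close> is an eigenvalue of left multiplication by \<open>h\<close>;
  a finite-dimensional algebra has only finitely many eigenvalues, and any other
  \<open>t \<noteq> 0\<close> gives the unit \<open>1 - h / t\<close>.\<close>

lemma lines_meet_units_if_fin_dim:
  assumes inf: "infinite (UNIV :: 'k set)" and fin: "fin_dim sc (UNIV :: 'a set)"
  shows "lines_meet_units sc"
  unfolding lines_meet_units_def
proof
  fix h
  define T where "T = {t. h - sc t 1 \<notin> units}"
  have "\<exists>x. x \<noteq> 0 \<and> h * x = sc t x" if "t \<in> T" for t
  proof -
    have "\<not> inj (\<lambda>x. (h - sc t 1) * x)"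
      using that unit_if_inj_mult_left[OF fin] unfolding T_def by blast
    then obtain x where "x \<noteq> 0" "(h - sc t 1) * x = 0"
      unfolding inj_mult_left_iff by blast
    then show ?thesis
      by (auto simp: left_diff_distrib simp flip: scale_mult_left)
  qed
  then obtain x where x: "\<And>t. t \<in> T \<Longrightarrow> x t \<noteq> 0 \<and> h * x t = sc t (x t)"
    by metis
  have "card T' \<le> dim (UNIV :: 'a set)" if "T' \<subseteq> T" "finite T'" for T'
  proof -
    have "independent (x ` T') \<and> inj_on x T'"
      using independent_eigenvectors[OF linear_mult_left \<open>finite T'\<close>] x that by blast
    then show ?thesis
      using independent_card_le_dim[OF fin] card_image by fastforce
  qed
  then have "finite (insert 0 T)"
    using finite_if_finite_subsets_card_bdd by blast
  then obtain t where t: "t \<notin> insert 0 T"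
    using ex_new_if_finite[OF inf] by blast
  then have "sc (- inverse t) (h - sc t 1) \<in> units"
    using scale_in_units[of "h - sc t 1" "- inverse t"] unfolding T_def by auto
  moreover have "sc (- inverse t) (h - sc t 1) = 1 + sc (- inverse t) h"
    using t by (auto simp: scale_right_diff_distrib)
  ultimately show "\<exists>c. c \<noteq> 0 \<and> 1 + sc c h \<in> units"
    using t by (intro exI[of _ "- inverse t"]) auto
qed

lemma lines_meet_units_if_Hs:
  assumes inf: "infinite (UNIV :: 'k set)" and "Hs sc"
  shows "lines_meet_units sc"
  using \<open>Hs sc\<close> unfolding Hs_def
proof (elim disjE exE conjE)
  fix n and e :: "nat \<Rightarrow> 'a"
  assume "\<forall>x y :: 'a. x * y = y * x" "(\<Sum>i<n. e i) = 1"
    "\<forall>i<n. \<forall>j<n. e i * e j = (if i = j then e i else 0)"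
    "\<forall>i<n. e i \<noteq> 0 \<and> (\<forall>x. e i * x \<noteq> 0 \<longrightarrow> (\<exists>y. e i * x * (e i * y) = e i))"
  then show ?thesis
    by (intro lines_meet_units_if_product_of_fields[OF inf, where e = e and n = n]) auto
qed (use lines_meet_units_if_fin_dim[OF inf] lines_meet_units_if_real_banach
      lines_meet_units_if_complex_banach fin_dim_subspace_iff in blast)+

end

theorem proposition5p2:
  fixes sc :: "'k::field \<Rightarrow> 'a::ring_1 \<Rightarrow> 'a"
    and V :: "'a set" and lam :: real
  assumes "infinite (UNIV :: 'k set)"
    and "is_algebra sc"
    and "Hs sc"
    and "fin_dim_subspace sc V" and "V \<inter> units \<noteq> {}"
    and "0 < lam" and "lam \<le> 1"
  shows "(\<exists>!H. atom sc lam V H \<and> 1 \<in> H) \<and>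
    (\<forall>H. atom sc lam V H \<and> 1 \<in> H \<longrightarrow>
       subalgebra sc H \<and> left_stabilizer V \<subseteq> H \<and>
       (\<forall>W. (atom sc lam V W \<and> W \<inter> units \<noteq> {}) \<longleftrightarrow>
            (\<exists>x\<in>units. W = (\<lambda>h. x * h) ` H)) \<and>
       (\<forall>W. admissible sc W \<longrightarrow>
            real (ldim sc (lspan sc (setprod W V)))
              \<ge> lam * real (ldim sc W) + real (ldim sc V) - lam * real (ldim sc H)))"
proof -
  interpret unital_algebra sc
    using unital_algebra_if_is_algebra[OF assms(2)] .
  interpret connectivity sc V lam
    by unfold_locales (use assms in blast)+
  have lines: "lines_meet_units sc"
    using lines_meet_units_if_Hs[OF assms(1,3)] .
  have unique: "\<exists>!H. atom sc lam V H \<and> 1 \<in> H"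
    using atom_containing_one_exists atom_eq_if_common_unit[OF _ _ _ one_in_units] by blast
  have properties: "subalgebra sc H \<and> left_stabilizer V \<subseteq> H \<and>
       (\<forall>W. (atom sc lam V W \<and> W \<inter> units \<noteq> {}) \<longleftrightarrow> (\<exists>x\<in>units. W = (\<lambda>h. x * h) ` H)) \<and>
       (\<forall>W. admissible sc W \<longrightarrow>
          real (dim (prod_span W)) \<ge> lam * real (dim W) + real (dim V) - lam * real (dim H))"
    if H: "atom sc lam V H" "1 \<in> H" for H
  proof (intro conjI allI impI)
    show "subalgebra sc H"
      by (rule atom_subalgebra[OF lines H])
    show "left_stabilizer V \<subseteq> H"
      by (rule left_stabilizer_subset_atom[OF H])
    show "atom sc lam V W \<and> W \<inter> units \<noteq> {} \<longleftrightarrow> (\<exists>x\<in>units. W = (\<lambda>h. x * h) ` H)" for W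
      by (rule atom_meets_units_iff_translate[OF H])
    show "real (dim (prod_span W)) \<ge> lam * real (dim W) + real (dim V) - lam * real (dim H)"
      if "admissible sc W" for W
      by (rule dim_prod_span_lower_bound[OF atom_imp_fragment[OF H(1)] that])
  qed
  show ?thesis
    using unique properties by (intro conjI allI impI) auto
qed
end
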